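(* Let $(A(t))_{t\in\mathbb{N}_0}$ be a sequence of row-stochastic matrices in $\mathbb{R}_{\ge 0}^{n\times n}$ such that: (i) every $A(t)$ has strictly positive diagonal entries; (ii) for every $t$ and all $i,j$, $A(t)_{ij}>0\iff A(t)_{ji}>0$; (iii) there is $\delta>0$ such that for every $t$ every positive entry of $A(t)$ is greater than $\delta$. For $t_0<t_1$ let $A(t_0,t_1):=A(t_1-1)A(t_1-2)\cdots A(t_0)$. Then for every two time steps $t_0<t_1$, the lowest positive entry of $A(t_0,t_1)$ is greater than $\delta^{n^2-n+2}$. *)

theory Defs
  imports "HOL-Analysis.Analysis"
begin

definition row_stochastic :: "real^'n^'n \<Rightarrow> bool" where
  "row_stochastic M \<longleftrightarrow> (\<forall>i j. M $ i $ j \<ge> 0) \<and> (\<forall>i. (\<Sum>j\<in>UNIV. M $ i $ j) = 1)"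

fun mat_prod_from :: "(nat \<Rightarrow> real^'n^'n) \<Rightarrow> nat \<Rightarrow> nat \<Rightarrow> real^'n^'n" where
  "mat_prod_from A t0 0 = mat 1"
| "mat_prod_from A t0 (Suc k) = A (t0 + k) ** mat_prod_from A t0 k"

definition trans_mat :: "(nat \<Rightarrow> real^'n^'n) \<Rightarrow> nat \<Rightarrow> nat \<Rightarrow> real^'n^'n" where
  "trans_mat A t0 t1 = mat_prod_from A t0 (t1 - t0)"

end

theory Submission
  imports Defs
begin

text \<open>
  Fix a column j and follow its support S(k) = {i. A(t0,t0+k)_ij > 0} as k grows. Positive
  diagonals make S(k) increasing. We show by induction that every positive entry of the
  column is at least \<delta>^(|S(k)| - 1). If the support does not grow in a step, the symmetric
  pattern of the new factor B shows that rows in the support only see the support, so each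
  new entry is a convex combination of old entries \<ge> \<delta>^(|S| - 1). If it grows, a single
  term B_il P_lj already gives \<delta>\<cdot>\<delta>^(|S| - 1) \<ge> \<delta>^(|S'| - 1). Hence all positive entries are at
  least \<delta>^(n - 1), which is far stronger than the claimed \<delta>^(n^2 - n + 2).
\<close>

definition col_support :: "real^'n^'n \<Rightarrow> 'n \<Rightarrow> 'n set" where
  "col_support M j = {i. M $ i $ j > 0}"

lemma row_stochastic_entry_le_one:
  assumes "row_stochastic M"
  shows "M $ i $ j \<le> 1"
proof -
  have "M $ i $ j \<le> (\<Sum>l\<in>UNIV. M $ i $ l)"
    by (rule member_le_sum) (use assms in \<open>auto simp: row_stochastic_def\<close>)
  then show ?thesis using assms by (simp add: row_stochastic_def)
qed

lemma matrix_mult_entry_ge_term: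
  fixes B P :: "real^'n^'n"
  assumes "\<And>i l. B $ i $ l \<ge> 0" and "\<And>l j. P $ l $ j \<ge> 0"
  shows "(B ** P) $ i $ j \<ge> B $ i $ l * P $ l $ j"
  unfolding matrix_matrix_mult_def
  by (simp, rule member_le_sum) (auto intro: mult_nonneg_nonneg assms)

lemma mat_prod_from_nonneg:
  assumes "\<And>t. row_stochastic (A t)"
  shows "mat_prod_from A t0 k $ i $ j \<ge> 0"
proof (induction k arbitrary: i)
  case 0 then show ?case by (simp add: mat_def)
next
  case (Suc k)
  show ?case using assms Suc
    by (auto simp: matrix_matrix_mult_def row_stochastic_def intro!: sum_nonneg)
qed

lemma col_support_mono:
  fixes B P :: "real^'n^'n"
  assumes "\<And>i l. B $ i $ l \<ge> 0" and "\<And>i. B $ i $ i > 0" and "\<And>l j. P $ l $ j \<ge> 0"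
  shows "col_support P j \<subseteq> col_support (B ** P) j"
proof
  fix i assume "i \<in> col_support P j"
  then have "B $ i $ i * P $ i $ j > 0" using assms(2) by (simp add: col_support_def)
  then show "i \<in> col_support (B ** P) j"
    using matrix_mult_entry_ge_term[of B P i i j] assms by (simp add: col_support_def)
qed

lemma mult_entry_ge_on_closed_support:
  fixes B P :: "real^'n^'n"
  assumes B: "row_stochastic B"
    and symm: "\<And>i l. B $ i $ l > 0 \<longleftrightarrow> B $ l $ i > 0"
    and P: "\<And>l j. P $ l $ j \<ge> 0"
    and closed: "col_support (B ** P) j = col_support P j"
    and bound: "\<And>l. l \<in> col_support P j \<Longrightarrow> P $ l $ j \<ge> m"
    and i: "i \<in> col_support P j"
  shows "(B ** P) $ i $ j \<ge> m"
proof -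
  have Bnn: "\<And>i l. B $ i $ l \<ge> 0" using B by (simp add: row_stochastic_def)
  have term_ge: "B $ i $ l * m \<le> B $ i $ l * P $ l $ j" for l
  proof (cases "B $ i $ l > 0")
    case True
    then have "B $ l $ i * P $ i $ j > 0" using symm i by (simp add: col_support_def)
    then have "l \<in> col_support (B ** P) j"
      using matrix_mult_entry_ge_term[of B P l i j] Bnn P by (simp add: col_support_def)
    then show ?thesis using closed bound True by (simp add: mult_left_mono)
  next
    case False
    then show ?thesis using Bnn[of i l] by simp
  qed
  have "m = (\<Sum>l\<in>UNIV. B $ i $ l * m)"
    using B by (simp add: row_stochastic_def sum_distrib_right[symmetric])
  also have "\<dots> \<le> (\<Sum>l\<in>UNIV. B $ i $ l * P $ l $ j)"
    by (rule sum_mono) (rule term_ge)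
  also have "\<dots> = (B ** P) $ i $ j"
    by (simp add: matrix_matrix_mult_def)
  finally show ?thesis .
qed

lemma col_support_power_bound_step:
  fixes B P :: "real^'n^'n"
  assumes B: "row_stochastic B"
    and diag: "\<And>i. B $ i $ i > 0"
    and symm: "\<And>i l. B $ i $ l > 0 \<longleftrightarrow> B $ l $ i > 0"
    and delta: "0 < \<delta>" "\<delta> \<le> 1"
    and delta_bound: "\<And>i l. B $ i $ l > 0 \<Longrightarrow> B $ i $ l > \<delta>"
    and P: "\<And>l j. P $ l $ j \<ge> 0"
    and IH: "\<And>l. l \<in> col_support P j \<Longrightarrow> P $ l $ j \<ge> \<delta> ^ (card (col_support P j) - 1)"
    and i: "i \<in> col_support (B ** P) j"
  shows "(B ** P) $ i $ j \<ge> \<delta> ^ (card (col_support (B ** P) j) - 1)"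
proof -
  define S where "S = col_support P j"
  define S' where "S' = col_support (B ** P) j"
  have Bnn: "\<And>i l. B $ i $ l \<ge> 0" using B by (simp add: row_stochastic_def)
  have "S \<subseteq> S'" unfolding S_def S'_def using col_support_mono Bnn diag P by blast
  show ?thesis
  proof (cases "S' = S")
    case True
    then show ?thesis
      using mult_entry_ge_on_closed_support[OF B symm P _ IH] i
      unfolding S_def S'_def by simp
  next
    case False
    obtain l where l: "B $ i $ l * P $ l $ j > 0"
    proof (rule ccontr)
      assume "\<not> thesis"
      then have "\<And>l. B $ i $ l * P $ l $ j \<le> 0" using that not_less by blast
      then have "(B ** P) $ i $ j \<le> 0"
        by (simp add: matrix_matrix_mult_def sum_nonpos)
      then show False using i by (simp add: col_support_def)
    qed
    then have Bil: "B $ i $ l > 0" and lS: "l \<in> S"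
      using Bnn[of i l] P[of l j] by (auto simp: zero_less_mult_iff S_def col_support_def)
    have "card S < card S'" using \<open>S \<subseteq> S'\<close> False by (simp add: psubset_card_mono psubset_eq)
    have "card S \<ge> 1" using lS by (metis One_nat_def Suc_leI card_gt_0_iff empty_iff finite)
    have "\<delta> ^ (card S' - 1) \<le> \<delta> ^ card S"
      using \<open>card S < card S'\<close> delta by (intro power_decreasing) auto
    also have "\<dots> = \<delta> * \<delta> ^ (card S - 1)"
      using \<open>card S \<ge> 1\<close> by (simp add: power_Suc[symmetric])
    also have "\<dots> \<le> B $ i $ l * P $ l $ j"
      using delta_bound[OF Bil] IH lS delta by (intro mult_mono) (auto simp: S_def)
    also have "\<dots> \<le> (B ** P) $ i $ j"
      using matrix_mult_entry_ge_term Bnn P by blast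
    finally show ?thesis unfolding S'_def .
  qed
qed

lemma mat_prod_from_col_support_bound:
  assumes stoch: "\<And>t. row_stochastic (A t)"
    and diag: "\<And>t i. A t $ i $ i > 0"
    and symm: "\<And>t i j. A t $ i $ j > 0 \<longleftrightarrow> A t $ j $ i > 0"
    and delta: "0 < \<delta>" "\<delta> \<le> 1"
    and delta_bound: "\<And>t i j. A t $ i $ j > 0 \<Longrightarrow> A t $ i $ j > \<delta>"
  shows "i \<in> col_support (mat_prod_from A t0 k) j \<Longrightarrow>
    mat_prod_from A t0 k $ i $ j \<ge> \<delta> ^ (card (col_support (mat_prod_from A t0 k) j) - 1)"
proof (induction k arbitrary: i)
  case 0
  then show ?case by (auto simp: mat_def col_support_def split: if_splits)
next
  case (Suc k)
  then show ?case
    using col_support_power_bound_step[OF stoch diag symm delta delta_bound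
        mat_prod_from_nonneg[OF stoch]]
    by simp
qed

lemma trans_mat_pos_entry_ge:
  fixes A :: "nat \<Rightarrow> real^'n^'n"
  assumes stoch: "\<And>t. row_stochastic (A t)"
    and diag: "\<And>t i. A t $ i $ i > 0"
    and symm: "\<And>t i j. A t $ i $ j > 0 \<longleftrightarrow> A t $ j $ i > 0"
    and delta_pos: "0 < \<delta>"
    and delta_bound: "\<And>t i j. A t $ i $ j > 0 \<Longrightarrow> A t $ i $ j > \<delta>"
    and pos: "trans_mat A t0 t1 $ i $ j > 0"
  shows "trans_mat A t0 t1 $ i $ j \<ge> \<delta> ^ (CARD('n) - 1)"
proof -
  have "\<delta> < 1"
    using delta_bound[OF diag] row_stochastic_entry_le_one[OF stoch] by (meson less_le_trans)
  let ?S = "col_support (trans_mat A t0 t1) j"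
  have "\<delta> ^ (CARD('n) - 1) \<le> \<delta> ^ (card ?S - 1)"
    using delta_pos \<open>\<delta> < 1\<close> by (intro power_decreasing) (auto simp: card_mono diff_le_mono)
  also have "\<dots> \<le> trans_mat A t0 t1 $ i $ j"
    using mat_prod_from_col_support_bound[OF stoch diag symm delta_pos _ delta_bound] pos \<open>\<delta> < 1\<close>
    by (simp add: trans_mat_def col_support_def)
  finally show ?thesis .
qed

theorem proposition2:
  fixes A :: "nat \<Rightarrow> real^'n^'n" and \<delta> :: real
  assumes stoch: "\<And>t. row_stochastic (A t)"
    and diag: "\<And>t i. A t $ i $ i > 0"
    and symm: "\<And>t i j. A t $ i $ j > 0 \<longleftrightarrow> A t $ j $ i > 0"
    and delta_pos: "\<delta> > 0"
    and delta_bound: "\<And>t i j. A t $ i $ j > 0 \<Longrightarrow> A t $ i $ j > \<delta>"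
    and t01: "t0 < t1"
  shows "\<forall>i j. trans_mat A t0 t1 $ i $ j > 0 \<longrightarrow>
           trans_mat A t0 t1 $ i $ j > \<delta> ^ (CARD('n)^2 - CARD('n) + 2)"
proof (intro allI impI)
  fix i j
  assume pos: "trans_mat A t0 t1 $ i $ j > 0"
  have "\<delta> < 1"
    using delta_bound[OF diag] row_stochastic_entry_le_one[OF stoch] by (meson less_le_trans)
  have "CARD('n) - 1 < CARD('n)^2 - CARD('n) + 2"
    by (cases "CARD('n)") (simp_all add: power2_eq_square)
  then have "\<delta> ^ (CARD('n)^2 - CARD('n) + 2) < \<delta> ^ (CARD('n) - 1)"
    using delta_pos \<open>\<delta> < 1\<close> by (intro power_strict_decreasing) auto
  also have "\<dots> \<le> trans_mat A t0 t1 $ i $ j"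
    using trans_mat_pos_entry_ge[OF stoch diag symm delta_pos delta_bound pos] .
  finally show "trans_mat A t0 t1 $ i $ j > \<delta> ^ (CARD('n)^2 - CARD('n) + 2)" .
qed

end
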